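(* Let $n,m\ge 1$, let $A=(a_1,\ldots,a_m)$ be a real $n\times m$ matrix with $a_i\neq 0$ for all $i$, and let $b=(b_1,\ldots,b_m)^\top\in\mathbb{R}^m$ be such that $K=\{x\in\mathbb{R}^n \mid A^\top x\le b\}$ is nonempty. Let $H_i^c=\{x\in\mathbb{R}^n\mid a_i^\top x>b_i\}$ for $i=1,\ldots,m$. For $\varepsilon>0$ put $b_i(\varepsilon)=b_i+\varepsilon^i$, $H_i(\varepsilon)=\{x\mid a_i^\top x\le b_i(\varepsilon)\}$, $\partial H_i(\varepsilon)=\{x\mid a_i^\top x= b_i(\varepsilon)\}$, $K(\varepsilon)=\bigcap_{i=1}^m H_i(\varepsilon)$, $F_i(\varepsilon)=\partial H_i(\varepsilon)\cap K(\varepsilon)$, and $\mathcal{F}(\varepsilon)=\{J\subseteq\{1,\ldots,m\}\mid J\neq\emptyset,\ \bigcap_{i\in J}F_i(\varepsilon)\neq\emptyset\}$, and let $\mathcal{F}(0+)$ denote the common value of $\mathcal{F}(\varepsilon)$ for all sufficiently small $\varepsilon>0$ (which is known to exist). Then for all $x\in\mathbb{R}^n$, \[ \mathbf{1}_{\bigcup_{i=1}^m H_i^c}(x)=\sum_{J\in\mathcal{F}(0+)}(-1)^{|J|-1}\,\mathbf{1}_{\bigcap_{i\in J}H_i^c}(x), \] where $\mathbf{1}_S$ denotes the indicator function of $S$ and $|J|$ the cardinality of $J$. *)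

theory Defs
  imports "HOL-Analysis.Analysis"
begin

text \<open>The columns a_1..a_m of the n x m matrix A are given as a function
  a :: nat => real^'n (only indices 1..m matter), and b :: nat => real.\<close>

definition Hc :: "(nat \<Rightarrow> real^'n) \<Rightarrow> (nat \<Rightarrow> real) \<Rightarrow> nat \<Rightarrow> (real^'n) set" where
  "Hc a b i = {x. a i \<bullet> x > b i}"

definition beps :: "(nat \<Rightarrow> real) \<Rightarrow> real \<Rightarrow> nat \<Rightarrow> real" where
  "beps b \<epsilon> i = b i + \<epsilon> ^ i"

definition Heps :: "(nat \<Rightarrow> real^'n) \<Rightarrow> (nat \<Rightarrow> real) \<Rightarrow> real \<Rightarrow> nat \<Rightarrow> (real^'n) set" where
  "Heps a b \<epsilon> i = {x. a i \<bullet> x \<le> beps b \<epsilon> i}"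

definition bdHeps :: "(nat \<Rightarrow> real^'n) \<Rightarrow> (nat \<Rightarrow> real) \<Rightarrow> real \<Rightarrow> nat \<Rightarrow> (real^'n) set" where
  "bdHeps a b \<epsilon> i = {x. a i \<bullet> x = beps b \<epsilon> i}"

definition Keps :: "(nat \<Rightarrow> real^'n) \<Rightarrow> (nat \<Rightarrow> real) \<Rightarrow> nat \<Rightarrow> real \<Rightarrow> (real^'n) set" where
  "Keps a b m \<epsilon> = (\<Inter>i\<in>{1..m}. Heps a b \<epsilon> i)"

definition Feps :: "(nat \<Rightarrow> real^'n) \<Rightarrow> (nat \<Rightarrow> real) \<Rightarrow> nat \<Rightarrow> real \<Rightarrow> nat \<Rightarrow> (real^'n) set" where
  "Feps a b m \<epsilon> i = bdHeps a b \<epsilon> i \<inter> Keps a b m \<epsilon>"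

definition famF :: "(nat \<Rightarrow> real^'n) \<Rightarrow> (nat \<Rightarrow> real) \<Rightarrow> nat \<Rightarrow> real \<Rightarrow> nat set set" where
  "famF a b m \<epsilon> = {J. J \<subseteq> {1..m} \<and> J \<noteq> {} \<and> (\<Inter>i\<in>J. Feps a b m \<epsilon> i) \<noteq> {}}"

definition famF0 :: "(nat \<Rightarrow> real^'n) \<Rightarrow> (nat \<Rightarrow> real) \<Rightarrow> nat \<Rightarrow> nat set set" where
  "famF0 a b m = (THE \<F>. \<forall>\<^sub>F \<epsilon> in at_right 0. famF a b m \<epsilon> = \<F>)"

end

theory Submission
  imports Defs "HOL-Computational_Algebra.Polynomial"
begin

text \<open>Fix the right-hand side c and a point x. The constraints violated at x, together with
  the nonemptiness of the corresponding faces, form a simplicial complex whose Euler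
  characteristic is 1 as soon as x violates some constraint. To see this, walk from a relative
  interior point p of the polyhedron towards x and order the violated constraints by the time at
  which the segment crosses their hyperplanes. Removing them one by one in reverse order is a
  shelling: the link of a removed vertex j is the same configuration on the smaller face
  \<open>a\<^sub>j\<bullet>y = c\<^sub>j\<close>, seen from the point where the segment crosses that hyperplane, so induction on
  the codimension applies. The perturbation b(\<epsilon>) only serves to make the family of nonempty faces
  eventually constant: a face is nonempty iff some flat \<open>{y. a\<^sub>i\<bullet>y = c\<^sub>i, i \<in> B}\<close> is nonempty and
  contained in the polyhedron, which amounts to finitely many linear conditions on c, hence
  polynomial conditions on \<epsilon>, and a polynomial has eventually constant sign as \<epsilon> \<rightarrow> 0+.\<close>

definition euler_char :: "('a set \<Rightarrow> bool) \<Rightarrow> 'a set \<Rightarrow> real" where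
  "euler_char P X = (\<Sum>J | J \<subseteq> X \<and> J \<noteq> {} \<and> P J. (-1) ^ (card J - 1))"

lemma euler_char_Pow:
  assumes "finite X"
  shows "euler_char P X = (\<Sum>J\<in>Pow X. if J \<noteq> {} \<and> P J then (-1) ^ (card J - 1) else 0)"
  unfolding euler_char_def using assms
  by (subst sum.inter_filter[symmetric]) (auto intro: sum.cong)

lemma euler_char_empty [simp]: "euler_char P {} = 0"
  by (simp add: euler_char_def)

lemma euler_char_eq_0: "(\<And>J. J \<subseteq> X \<Longrightarrow> J \<noteq> {} \<Longrightarrow> \<not> P J) \<Longrightarrow> euler_char P X = 0"
  unfolding euler_char_def by (rule sum.neutral) auto

lemma euler_char_insert:
  assumes "finite X" "j \<notin> X"
  shows "euler_char P (insert j X) =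
           euler_char P X + (if P {j} then 1 else 0) - euler_char (\<lambda>J. P (insert j J)) X"
proof -
  define g where
    "g (Q :: 'a set \<Rightarrow> bool) J = (if J \<noteq> {} \<and> Q J then (-1::real) ^ (card J - 1) else 0)" for Q J
  have g_insert: "g P (insert j J) = (if J = {} \<and> P {j} then 1 else 0) - g (\<lambda>J. P (insert j J)) J"
    if "J \<in> Pow X" for J
  proof -
    have "finite J" "j \<notin> J" using that assms finite_subset by auto
    moreover have "(-1::real) ^ card J = - ((-1) ^ (card J - 1))" if "J \<noteq> {}" "finite J"
      using that by (cases "card J") auto
    ultimately show ?thesis by (auto simp: g_def)
  qed
  have "euler_char P (insert j X) = (\<Sum>J\<in>Pow X. g P J) + (\<Sum>J\<in>insert j ` Pow X. g P J)"
    unfolding euler_char_Pow[OF finite_insert[THEN iffD2, OF assms(1)]] Pow_insert g_def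
    using assms by (subst sum.union_disjoint) auto
  also have "(\<Sum>J\<in>insert j ` Pow X. g P J) = (\<Sum>J\<in>Pow X. g P (insert j J))"
    using assms by (subst sum.reindex) (auto simp: inj_on_def)
  also have "\<dots> = (\<Sum>J\<in>Pow X. (if J = {} \<and> P {j} then 1 else 0) - g (\<lambda>J. P (insert j J)) J)"
    by (rule sum.cong[OF refl]) (rule g_insert)
  also have "\<dots> = (if P {j} then 1 else 0) - (\<Sum>J\<in>Pow X. g (\<lambda>J. P (insert j J)) J)"
    using assms by (cases "P {j}") (simp_all add: sum_subtractf sum_negf)
  finally show ?thesis
    using assms by (simp add: euler_char_Pow g_def)
qed

lemma euler_char_singleton: "euler_char P {j} = (if P {j} then 1 else 0)"
  using euler_char_insert[of "{}" j P] by simp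

lemma euler_char_cone:
  assumes "finite X" "k \<in> X" "P {k}" "\<And>J. J \<subseteq> X \<Longrightarrow> P (insert k J) = P J"
  shows "euler_char P X = 1"
proof -
  have "euler_char (\<lambda>J. P (insert k J)) (X - {k}) = euler_char P (X - {k})"
    unfolding euler_char_def using assms(4) by (intro sum.cong) auto
  then show ?thesis
    using euler_char_insert[of "X - {k}" k P] assms(1-3) by (simp add: insert_absorb)
qed

lemma euler_char_shelling:
  fixes t :: "'a \<Rightarrow> real"
  assumes "finite X"
    and mono: "\<And>J J'. J \<subseteq> J' \<Longrightarrow> P J' \<Longrightarrow> P J"
    and first: "\<And>j. j \<in> X \<Longrightarrow> \<forall>k\<in>X. t j \<le> t k \<Longrightarrow> P {j}"
    and link: "\<And>j I. j \<in> X \<Longrightarrow> P {j} \<Longrightarrow> I \<noteq> {} \<Longrightarrow> I \<subseteq> {k\<in>X. t k \<le> t j} - {j} \<Longrightarrow>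
                 {k\<in>X. t k < t j} \<subseteq> I \<Longrightarrow> euler_char (\<lambda>J. P (insert j J)) I = 1"
  shows "I \<subseteq> X \<Longrightarrow> I \<noteq> {} \<Longrightarrow> \<forall>i\<in>I. \<forall>k\<in>X. t k < t i \<longrightarrow> k \<in> I \<Longrightarrow> euler_char P I = 1"
proof (induction "card I" arbitrary: I rule: less_induct)
  case less
  have "finite I" using less.prems(1) assms(1) finite_subset by blast
  obtain j where j: "j \<in> I" "\<And>i. i \<in> I \<Longrightarrow> t i \<le> t j"
    using Max_in[of "t ` I"] Max_ge[of "t ` I"] \<open>finite I\<close> less.prems(2) by fastforce
  define I' where "I' = I - {j}"
  have I: "I = insert j I'" "j \<notin> I'" "finite I'"
    using j(1) \<open>finite I\<close> by (auto simp: I'_def)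
  have below_j: "{k\<in>X. t k < t j} \<subseteq> I'"
    using less.prems(3) j(1) by (auto simp: I'_def)
  show ?case
  proof (cases "I' = {}")
    case True
    then have "P {j}"
      using first[of j] below_j less.prems(1) j(1) by (auto simp: not_less)
    then show ?thesis by (simp add: I True euler_char_singleton)
  next
    case False
    have "euler_char P I' = 1"
    proof (rule less.hyps)
      show "card I' < card I" using I by simp
      show "\<forall>i\<in>I'. \<forall>k\<in>X. t k < t i \<longrightarrow> k \<in> I'"
        using less.prems(3) j(2) by (fastforce simp: I'_def)
    qed (use False less.prems(1) I'_def in auto)
    moreover have "euler_char (\<lambda>J. P (insert j J)) I' = (if P {j} then 1 else 0)"
    proof (cases "P {j}")
      case True
      then show ?thesis
        using link[of j I'] less.prems(1) j False below_j by (auto simp: I'_def)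
    next
      case False
      have "euler_char (\<lambda>J. P (insert j J)) I' = 0"
        using False mono[of "{j}"] by (intro euler_char_eq_0) auto
      with False show ?thesis by simp
    qed
    ultimately show ?thesis by (simp add: I euler_char_insert)
  qed
qed

definition face :: "('i \<Rightarrow> 'v::real_inner) \<Rightarrow> ('i \<Rightarrow> real) \<Rightarrow> 'i set \<Rightarrow> 'i set \<Rightarrow> 'v set" where
  "face a c M E = {y. (\<forall>i\<in>M. a i \<bullet> y \<le> c i) \<and> (\<forall>i\<in>E. a i \<bullet> y = c i)}"

definition flat :: "('i \<Rightarrow> 'v::real_inner) \<Rightarrow> ('i \<Rightarrow> real) \<Rightarrow> 'i set \<Rightarrow> 'v set" where
  "flat a c B = {y. \<forall>i\<in>B. a i \<bullet> y = c i}"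

lemma face_antimono: "E \<subseteq> E' \<Longrightarrow> face a c M E' \<subseteq> face a c M E"
  by (auto simp: face_def)

lemma convex_face: "convex (face a c M E)"
proof -
  have "face a c M E = (\<Inter>i\<in>M. {y. a i \<bullet> y \<le> c i}) \<inter> (\<Inter>i\<in>E. {y. a i \<bullet> y = c i})"
    by (auto simp: face_def)
  then show ?thesis
    by (simp add: convex_INT convex_Int convex_halfspace_le convex_hyperplane)
qed

lemma face_relative_interior_point:
  assumes "finite M" "face a c M E \<noteq> {}"
  obtains p where "p \<in> face a c M E"
    "\<And>i. i \<in> M \<Longrightarrow> (\<forall>z\<in>face a c M E. a i \<bullet> z = c i) \<or> a i \<bullet> p < c i"
proof -
  let ?F = "face a c M E"
  have "\<exists>p\<in>?F. \<forall>i\<in>N. (\<forall>z\<in>?F. a i \<bullet> z = c i) \<or> a i \<bullet> p < c i" if "N \<subseteq> M" for N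
    using finite_subset[OF that assms(1)] that
  proof (induction N rule: finite_induct)
    case empty
    then show ?case using assms(2) by blast
  next
    case (insert k N)
    then obtain p where p: "p \<in> ?F" "\<forall>i\<in>N. (\<forall>z\<in>?F. a i \<bullet> z = c i) \<or> a i \<bullet> p < c i"
      by blast
    show ?case
    proof (cases "\<forall>z\<in>?F. a k \<bullet> z = c k")
      case True
      then show ?thesis using p by blast
    next
      case False
      then obtain z where z: "z \<in> ?F" "a k \<bullet> z \<noteq> c k" by blast
      let ?q = "(1/2) *\<^sub>R p + (1/2) *\<^sub>R z"
      have "?q \<in> ?F"
        using convex_face p(1) z(1) by (rule convexD) auto
      moreover have "a i \<bullet> ?q < c i"
        if "i \<in> insert k N" "\<not> (\<forall>z\<in>?F. a i \<bullet> z = c i)" for i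
      proof -
        have "a i \<bullet> p \<le> c i" "a i \<bullet> z \<le> c i"
          using p(1) z(1) that(1) insert.prems by (auto simp: face_def)
        moreover have "a i \<bullet> p < c i \<or> a i \<bullet> z < c i"
          using that p(2) z(2) \<open>a i \<bullet> z \<le> c i\<close> by auto
        ultimately show ?thesis by (auto simp: inner_add_right)
      qed
      ultimately show ?thesis by blast
    qed
  qed
  then show ?thesis using that by blast
qed

lemma segment_crossing:
  fixes p x :: "'v::real_inner"
  assumes p: "p \<in> face a c M E" and x: "x \<in> flat a c E"
    and X: "X \<subseteq> M" "\<forall>k\<in>X. a k \<bullet> p < c k \<and> c k \<le> a k \<bullet> x"
    and outside: "\<forall>i\<in>M - X. a i \<bullet> x \<le> c i"
    and t: "\<forall>k\<in>X. t k = (c k - a k \<bullet> p) / (a k \<bullet> x - a k \<bullet> p)"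
    and "j \<in> X"
  defines "y \<equiv> p + t j *\<^sub>R (x - p)"
  shows "y \<in> flat a c (insert j E)"
    and "\<And>i. i \<in> M \<Longrightarrow> c i < a i \<bullet> y \<longleftrightarrow> i \<in> X \<and> t i < t j"
    and "\<And>i. i \<in> X \<Longrightarrow> t i \<le> t j \<Longrightarrow> c i \<le> a i \<bullet> y"
proof -
  have y: "a i \<bullet> y = a i \<bullet> p + t j * (a i \<bullet> x - a i \<bullet> p)" for i
    by (simp add: y_def inner_add_right inner_diff_right)
  have X_pos: "a k \<bullet> x - a k \<bullet> p > 0" if "k \<in> X" for k
    using X(2)[rule_format, OF that] by linarith
  have X_diff: "a k \<bullet> y - c k = (a k \<bullet> x - a k \<bullet> p) * (t j - t k)" if "k \<in> X" for k
  proof -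
    have "(a k \<bullet> x - a k \<bullet> p) * t k = c k - a k \<bullet> p"
      using X_pos[OF that] by (simp add: t[rule_format, OF that])
    then show ?thesis by (simp add: y algebra_simps)
  qed
  show "c i \<le> a i \<bullet> y" if "i \<in> X" "t i \<le> t j" for i
  proof -
    have "0 \<le> (a i \<bullet> x - a i \<bullet> p) * (t j - t i)"
      using X_pos[OF that(1)] that(2) by simp
    then show ?thesis using X_diff[OF that(1)] by simp
  qed
  have "0 \<le> t j" "t j \<le> 1"
    using X(2)[rule_format, OF \<open>j \<in> X\<close>] by (auto simp: t[rule_format, OF \<open>j \<in> X\<close>] divide_le_eq_1)
  have outside_y: "a i \<bullet> y \<le> c i" if "i \<in> M" "i \<notin> X" for i
  proof -
    have "a i \<bullet> y = (1 - t j) * (a i \<bullet> p) + t j * (a i \<bullet> x)"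
      by (simp add: y algebra_simps)
    also have "\<dots> \<le> (1 - t j) * c i + t j * c i"
      using p outside[rule_format, of i] that that(1) \<open>0 \<le> t j\<close> \<open>t j \<le> 1\<close>
      by (intro add_mono mult_left_mono) (auto simp: face_def)
    finally show ?thesis by (simp add: algebra_simps)
  qed
  show "c i < a i \<bullet> y \<longleftrightarrow> i \<in> X \<and> t i < t j" if "i \<in> M" for i
  proof (cases "i \<in> X")
    case True
    have "c i < a i \<bullet> y \<longleftrightarrow> 0 < (a i \<bullet> x - a i \<bullet> p) * (t j - t i)"
      using X_diff[OF True] by linarith
    then show ?thesis
      using X_pos[OF True] True by (simp add: zero_less_mult_iff)
  next
    case False
    then show ?thesis using outside_y[OF that] by auto
  qed
  show "y \<in> flat a c (insert j E)"
    using p x X_diff[OF \<open>j \<in> X\<close>] by (auto simp: flat_def face_def y)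
qed

lemma euler_char_faces_by_crossing_order:
  fixes a :: "'i \<Rightarrow> 'v::real_inner"
  assumes "finite M" "E \<subseteq> M" "X \<subseteq> M" "X \<noteq> {}"
    and p: "p \<in> face a c M E" and x: "x \<in> flat a c E"
    and X: "\<forall>k\<in>X. a k \<bullet> p < c k \<and> c k \<le> a k \<bullet> x"
    and outside: "\<forall>i\<in>M - X. a i \<bullet> x \<le> c i"
    and link: "\<And>j y T. j \<in> M - E \<Longrightarrow> face a c M (insert j E) \<noteq> {} \<Longrightarrow> y \<in> flat a c (insert j E) \<Longrightarrow>
      T \<subseteq> {i\<in>M. a i \<bullet> y = c i} \<Longrightarrow> {i\<in>M. c i < a i \<bullet> y} \<union> T \<noteq> {} \<Longrightarrow>
      euler_char (\<lambda>J. face a c M (insert j E \<union> J) \<noteq> {}) ({i\<in>M. c i < a i \<bullet> y} \<union> T) = 1"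
  shows "euler_char (\<lambda>J. face a c M (E \<union> J) \<noteq> {}) X = 1"
proof -
  \<comment> \<open>\<open>t k\<close> is the time at which the segment from \<open>p\<close> to \<open>x\<close> crosses the hyperplane of \<open>k\<close>\<close>
  define t where "t k = (c k - a k \<bullet> p) / (a k \<bullet> x - a k \<bullet> p)" for k
  have "\<forall>k\<in>X. t k = (c k - a k \<bullet> p) / (a k \<bullet> x - a k \<bullet> p)"
    by (simp add: t_def)
  note crossing = segment_crossing[OF p x \<open>X \<subseteq> M\<close> X outside this]
  have "finite X" using assms(1,3) finite_subset by blast
  then show ?thesis
  proof (rule euler_char_shelling[where t = t])
    show "face a c M (E \<union> J) \<noteq> {}" if "J \<subseteq> J'" "face a c M (E \<union> J') \<noteq> {}" for J J'
      using that face_antimono[of "E \<union> J" "E \<union> J'" a c M] by blast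
  next
    fix j assume j: "j \<in> X" "\<forall>k\<in>X. t j \<le> t k"
    have "p + t j *\<^sub>R (x - p) \<in> face a c M (E \<union> {j})"
      using crossing(1,2)[OF j(1)] j(2) by (fastforce simp: face_def flat_def not_le)
    then show "face a c M (E \<union> {j}) \<noteq> {}" by blast
  next
    fix j I
    assume j: "j \<in> X" "face a c M (E \<union> {j}) \<noteq> {}"
      and I: "I \<noteq> {}" "I \<subseteq> {k\<in>X. t k \<le> t j} - {j}" "{k\<in>X. t k < t j} \<subseteq> I"
    let ?y = "p + t j *\<^sub>R (x - p)"
    have viol: "{i\<in>M. c i < a i \<bullet> ?y} = {k\<in>X. t k < t j}"
      using crossing(2)[OF j(1)] \<open>X \<subseteq> M\<close> by auto
    have tight: "I - {i\<in>M. c i < a i \<bullet> ?y} \<subseteq> {i\<in>M. a i \<bullet> ?y = c i}"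
      using I(2) crossing(3)[OF j(1)] \<open>X \<subseteq> M\<close> by (force simp: not_less)
    have "j \<in> M - E" using X j(1) p \<open>X \<subseteq> M\<close> by (auto simp: face_def)
    then have "euler_char (\<lambda>J. face a c M (insert j E \<union> J) \<noteq> {})
        ({i\<in>M. c i < a i \<bullet> ?y} \<union> (I - {i\<in>M. c i < a i \<bullet> ?y})) = 1"
      using j I crossing(1)[OF j(1)] tight by (intro link) auto
    moreover have "{i\<in>M. c i < a i \<bullet> ?y} \<union> (I - {i\<in>M. c i < a i \<bullet> ?y}) = I"
      using I(3) viol by auto
    ultimately show "euler_char (\<lambda>J. face a c M (E \<union> insert j J) \<noteq> {}) I = 1"
      by simp
  qed (use \<open>X \<noteq> {}\<close> in auto)
qed

lemma euler_char_faces_visible: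
  fixes a :: "'i \<Rightarrow> 'v::real_inner"
  assumes "finite M"
  shows "E \<subseteq> M \<Longrightarrow> face a c M E \<noteq> {} \<Longrightarrow> x \<in> flat a c E \<Longrightarrow> T \<subseteq> {i\<in>M. a i \<bullet> x = c i} \<Longrightarrow>
    {i\<in>M. c i < a i \<bullet> x} \<union> T \<noteq> {} \<Longrightarrow>
    euler_char (\<lambda>J. face a c M (E \<union> J) \<noteq> {}) ({i\<in>M. c i < a i \<bullet> x} \<union> T) = 1"
proof (induction "card (M - E)" arbitrary: E x T rule: less_induct)
  case less
  define X where "X = {i\<in>M. c i < a i \<bullet> x} \<union> T"
  have "X \<subseteq> M" "finite X" using less.prems(4) assms by (auto simp: X_def intro: finite_subset)
  have "euler_char (\<lambda>J. face a c M (E \<union> J) \<noteq> {}) X = 1"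
  proof (cases "\<exists>k\<in>X. \<forall>z\<in>face a c M E. a k \<bullet> z = c k")
    case True
    then obtain k where k: "k \<in> X" "\<forall>z\<in>face a c M E. a k \<bullet> z = c k" by blast
    then have cone: "face a c M (insert k (E \<union> J)) = face a c M (E \<union> J)" for J
      by (auto simp: face_def)
    show ?thesis
      by (rule euler_char_cone[OF \<open>finite X\<close> k(1)])
        (use cone[of "{}"] less.prems(2) in \<open>simp_all add: cone\<close>)
  next
    case False
    obtain p where p: "p \<in> face a c M E"
      "\<And>i. i \<in> M \<Longrightarrow> (\<forall>z\<in>face a c M E. a i \<bullet> z = c i) \<or> a i \<bullet> p < c i"
      using face_relative_interior_point[OF assms less.prems(2)] by blast
    have X: "\<forall>k\<in>X. a k \<bullet> p < c k \<and> c k \<le> a k \<bullet> x"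
      using p(2) False \<open>X \<subseteq> M\<close> less.prems(4) by (fastforce simp: X_def)
    have outside: "\<forall>i\<in>M - X. a i \<bullet> x \<le> c i"
      by (auto simp: X_def)
    show ?thesis
    proof (rule euler_char_faces_by_crossing_order[OF assms less.prems(1) \<open>X \<subseteq> M\<close> _
          p(1) less.prems(3) X outside])
      show "X \<noteq> {}" using less.prems(5) by (simp add: X_def)
    next
      fix j y T'
      assume "j \<in> M - E" "face a c M (insert j E) \<noteq> {}" "y \<in> flat a c (insert j E)"
        "T' \<subseteq> {i\<in>M. a i \<bullet> y = c i}" "{i\<in>M. c i < a i \<bullet> y} \<union> T' \<noteq> {}"
      moreover have "card (M - insert j E) < card (M - E)"
        using \<open>j \<in> M - E\<close> assms by (intro psubset_card_mono) auto
      ultimately show "euler_char (\<lambda>J. face a c M (insert j E \<union> J) \<noteq> {})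
          ({i\<in>M. c i < a i \<bullet> y} \<union> T') = 1"
        using less.prems(1) by (intro less.hyps) auto
    qed
  qed
  then show ?case by (simp add: X_def)
qed

lemma euler_char_violated_faces:
  fixes a :: "'i \<Rightarrow> 'v::real_inner"
  assumes "finite M" "face a c M {} \<noteq> {}"
  shows "euler_char (\<lambda>J. face a c M J \<noteq> {}) {i\<in>M. c i < a i \<bullet> x} =
           (if \<exists>i\<in>M. c i < a i \<bullet> x then 1 else 0)"
proof (cases "\<exists>i\<in>M. c i < a i \<bullet> x")
  case True
  then show ?thesis
    using euler_char_faces_visible[OF assms(1), where E = "{}" and T = "{}"] assms(2)
    by (auto simp: flat_def)
next
  case False
  then have no_violation: "{i\<in>M. c i < a i \<bullet> x} = {}" by auto
  show ?thesis unfolding no_violation using False by simp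
qed

lemma exists_point_more_tight:
  fixes y z :: "'v::real_inner"
  assumes "finite M" "y \<in> face a c M {}" "z \<notin> face a c M {}"
    and tight: "\<And>i. i \<in> M \<Longrightarrow> a i \<bullet> y = c i \<Longrightarrow> a i \<bullet> z = c i"
  obtains w where "w \<in> face a c M {}" "{i\<in>M. a i \<bullet> y = c i} \<subset> {i\<in>M. a i \<bullet> w = c i}"
proof -
  define U where "U = {i\<in>M. a i \<bullet> y < a i \<bullet> z}"
  define s where "s i = (c i - a i \<bullet> y) / (a i \<bullet> z - a i \<bullet> y)" for i
  obtain k where "k \<in> M" "c k < a k \<bullet> z" using assms(3) by (auto simp: face_def not_le)
  then have "k \<in> U" using assms(2) by (force simp: U_def face_def)
  then obtain i0 where i0: "i0 \<in> U" "\<And>i. i \<in> U \<Longrightarrow> s i0 \<le> s i"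
    using Min_in[of "s ` U"] Min_le[of "s ` U"] assms(1) by (fastforce simp: U_def)
  have y_le: "a i \<bullet> y \<le> c i" if "i \<in> M" for i
    using assms(2) that by (auto simp: face_def)
  have U_slack: "a i \<bullet> y < c i" if "i \<in> U" for i
    using that tight y_le[of i] by (force simp: U_def)
  define w where "w = y + s i0 *\<^sub>R (z - y)"
  have w: "a i \<bullet> w = a i \<bullet> y + s i0 * (a i \<bullet> z - a i \<bullet> y)" for i
    by (simp add: w_def inner_add_right inner_diff_right)
  have "0 \<le> s i0" using U_slack[OF i0(1)] i0(1) by (simp add: s_def U_def)
  have "a i \<bullet> w \<le> c i" if "i \<in> M" for i
  proof (cases "i \<in> U")
    case True
    then have "s i0 * (a i \<bullet> z - a i \<bullet> y) \<le> s i * (a i \<bullet> z - a i \<bullet> y)"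
      using i0(2) by (intro mult_right_mono) (auto simp: U_def)
    also have "\<dots> = c i - a i \<bullet> y" using True by (simp add: s_def U_def)
    finally show ?thesis by (simp add: w)
  next
    case False
    then have "s i0 * (a i \<bullet> z - a i \<bullet> y) \<le> 0"
      using that \<open>0 \<le> s i0\<close> by (simp add: U_def mult_nonneg_nonpos)
    then show ?thesis using y_le[OF that] by (simp add: w)
  qed
  then have "w \<in> face a c M {}" by (simp add: face_def)
  moreover have "{i\<in>M. a i \<bullet> y = c i} \<subset> {i\<in>M. a i \<bullet> w = c i}"
  proof -
    have "{i\<in>M. a i \<bullet> y = c i} \<subseteq> {i\<in>M. a i \<bullet> w = c i}"
      using tight by (auto simp: w)
    moreover have "a i0 \<bullet> w = c i0" "a i0 \<bullet> y \<noteq> c i0" "i0 \<in> M"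
      using i0(1) U_slack[OF i0(1)] by (auto simp: w s_def U_def)
    ultimately show ?thesis by blast
  qed
  ultimately show ?thesis using that by blast
qed

text \<open>A point of the face with the largest set of tight constraints lies in a minimal face,
  and a minimal face is the whole flat of its tight constraints.\<close>

lemma face_nonempty_iff_flat:
  fixes a :: "'i \<Rightarrow> 'v::real_inner"
  assumes "finite M" "J \<subseteq> M"
  shows "face a c M J \<noteq> {} \<longleftrightarrow>
           (\<exists>B. J \<subseteq> B \<and> B \<subseteq> M \<and> flat a c B \<noteq> {} \<and> flat a c B \<subseteq> face a c M {})"
proof
  assume "face a c M J \<noteq> {}"
  define tight where "tight y = {i\<in>M. a i \<bullet> y = c i}" for y
  have "card (tight y) < Suc (card M)" for y
    using assms(1) by (simp add: tight_def card_mono le_imp_less_Suc)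
  moreover obtain y0 where "y0 \<in> face a c M J" using \<open>face a c M J \<noteq> {}\<close> by blast
  ultimately obtain y where y: "y \<in> face a c M J"
    and y_max: "\<And>y'. y' \<in> face a c M J \<Longrightarrow> card (tight y') \<le> card (tight y)"
    using ex_has_greatest_nat[of "\<lambda>y. y \<in> face a c M J" y0 "\<lambda>y. card (tight y)"] by blast
  have "flat a c (tight y) \<subseteq> face a c M {}"
  proof
    fix z assume z: "z \<in> flat a c (tight y)"
    show "z \<in> face a c M {}"
    proof (rule ccontr)
      assume "z \<notin> face a c M {}"
      moreover have "y \<in> face a c M {}" using y face_antimono[of "{}" J] by blast
      ultimately obtain w where w: "w \<in> face a c M {}" "tight y \<subset> tight w"
        using exists_point_more_tight[OF assms(1)] z unfolding tight_def flat_def by blast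
      have "J \<subseteq> tight w" using y assms(2) w(2) by (force simp: face_def tight_def)
      with w(1) have "w \<in> face a c M J" by (auto simp: face_def tight_def)
      moreover have "card (tight y) < card (tight w)"
        using w(2) assms(1) by (intro psubset_card_mono) (auto simp: tight_def)
      ultimately show False using y_max by fastforce
    qed
  qed
  moreover have "J \<subseteq> tight y" "y \<in> flat a c (tight y)"
    using y assms(2) by (auto simp: tight_def face_def flat_def)
  ultimately show "\<exists>B. J \<subseteq> B \<and> B \<subseteq> M \<and> flat a c B \<noteq> {} \<and> flat a c B \<subseteq> face a c M {}"
    by (intro exI[of _ "tight y"]) (auto simp: tight_def)
next
  assume "\<exists>B. J \<subseteq> B \<and> B \<subseteq> M \<and> flat a c B \<noteq> {} \<and> flat a c B \<subseteq> face a c M {}"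
  then show "face a c M J \<noteq> {}" by (force simp: face_def flat_def)
qed

lemma exists_orthogonal_to_span:
  fixes v :: "'v::euclidean_space"
  assumes "v \<notin> span A"
  obtains r where "\<And>u. u \<in> span A \<Longrightarrow> u \<bullet> r = 0" "v \<bullet> r = 1"
proof -
  obtain q z where q: "q \<in> span A" and z: "\<And>u. u \<in> span A \<Longrightarrow> orthogonal z u" and "v = q + z"
    using orthogonal_subspace_decomp_exists[of A v] by blast
  have "z \<noteq> 0" using q assms \<open>v = q + z\<close> by auto
  have "q \<bullet> z = 0" using z[OF q] by (simp add: orthogonal_def inner_commute)
  then have "v \<bullet> z = z \<bullet> z" using \<open>v = q + z\<close> by (simp add: inner_add_left)
  show ?thesis
  proof
    show "u \<bullet> ((1 / (z \<bullet> z)) *\<^sub>R z) = 0" if "u \<in> span A" for u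
      using z[OF that] by (simp add: orthogonal_def inner_commute)
    show "v \<bullet> ((1 / (z \<bullet> z)) *\<^sub>R z) = 1"
      using \<open>v \<bullet> z = z \<bullet> z\<close> \<open>z \<noteq> 0\<close> by simp
  qed
qed

lemma biorthogonal_system:
  fixes a :: "'i \<Rightarrow> 'v::euclidean_space"
  assumes "independent (a ` S)" "inj_on a S"
  obtains w where "\<forall>s\<in>S. \<forall>t\<in>S. a s \<bullet> w t = (if s = t then 1 else 0)"
proof -
  have "\<exists>r. (\<forall>s\<in>S - {t}. a s \<bullet> r = 0) \<and> a t \<bullet> r = 1" if "t \<in> S" for t
  proof -
    have "a ` (S - {t}) = a ` S - {a t}"
      using assms(2) that by (auto simp: inj_on_def)
    then have "a t \<notin> span (a ` (S - {t}))"
      using assms(1) that by (auto simp: dependent_def)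
    then obtain r where "\<And>u. u \<in> span (a ` (S - {t})) \<Longrightarrow> u \<bullet> r = 0" "a t \<bullet> r = 1"
      using exists_orthogonal_to_span by blast
    then show ?thesis by (intro exI[of _ r]) (auto intro: span_base)
  qed
  then obtain w where "\<forall>t\<in>S. (\<forall>s\<in>S - {t}. a s \<bullet> w t = 0) \<and> a t \<bullet> w t = 1"
    by metis
  then show ?thesis by (intro that) auto
qed

lemma inner_eq_sum_coeffs:
  "a k = (\<Sum>s\<in>S. \<mu> s *\<^sub>R a s) \<Longrightarrow> \<forall>s\<in>S. a s \<bullet> z = c s \<Longrightarrow> a k \<bullet> z = (\<Sum>s\<in>S. \<mu> s * c s)"
  by (simp add: inner_sum_left)

lemma flat_nonempty_iff:
  assumes "finite S" "S \<subseteq> B"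
    and w: "\<forall>s\<in>S. \<forall>t\<in>S. a s \<bullet> w t = (if s = t then 1 else 0)"
    and \<mu>: "\<forall>i\<in>B. a i = (\<Sum>s\<in>S. \<mu> i s *\<^sub>R a s)"
  shows "flat a c B \<noteq> {} \<longleftrightarrow> (\<forall>i\<in>B. (\<Sum>s\<in>S. \<mu> i s * c s) = c i)"
proof
  assume "flat a c B \<noteq> {}"
  then obtain y where y: "\<forall>i\<in>B. a i \<bullet> y = c i" by (auto simp: flat_def)
  then have "\<forall>s\<in>S. a s \<bullet> y = c s" using assms(2) by blast
  show "\<forall>i\<in>B. (\<Sum>s\<in>S. \<mu> i s * c s) = c i"
  proof
    fix i assume "i \<in> B"
    have "a i \<bullet> y = (\<Sum>s\<in>S. \<mu> i s * c s)"
      by (rule inner_eq_sum_coeffs[OF \<mu>[rule_format, OF \<open>i \<in> B\<close>] \<open>\<forall>s\<in>S. a s \<bullet> y = c s\<close>])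
    then show "(\<Sum>s\<in>S. \<mu> i s * c s) = c i" using y \<open>i \<in> B\<close> by simp
  qed
next
  assume consistent: "\<forall>i\<in>B. (\<Sum>s\<in>S. \<mu> i s * c s) = c i"
  define y where "y = (\<Sum>t\<in>S. c t *\<^sub>R w t)"
  have "\<forall>s\<in>S. a s \<bullet> y = c s"
  proof
    fix s assume "s \<in> S"
    then have "a s \<bullet> y = (\<Sum>t\<in>S. if s = t then c t else 0)"
      unfolding y_def inner_sum_right using w by (intro sum.cong) auto
    then show "a s \<bullet> y = c s" using assms(1) \<open>s \<in> S\<close> by simp
  qed
  then have "a i \<bullet> y = c i" if "i \<in> B" for i
    using inner_eq_sum_coeffs[OF \<mu>[rule_format, OF that]] consistent that by metis
  then have "y \<in> flat a c B" by (simp add: flat_def)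
  then show "flat a c B \<noteq> {}" by blast
qed

lemma flat_subset_polyhedron_iff:
  fixes a :: "'i \<Rightarrow> 'v::euclidean_space"
  assumes "S \<subseteq> B" "a ` B \<subseteq> span (a ` S)"
    and \<mu>: "\<forall>k. a k \<in> span (a ` S) \<longrightarrow> a k = (\<Sum>s\<in>S. \<mu> k s *\<^sub>R a s)"
    and y: "y \<in> flat a c B"
  shows "flat a c B \<subseteq> face a c M {} \<longleftrightarrow>
           (\<forall>k\<in>M. a k \<in> span (a ` S) \<and> (\<Sum>s\<in>S. \<mu> k s * c s) \<le> c k)"
proof
  assume sub: "flat a c B \<subseteq> face a c M {}"
  show "\<forall>k\<in>M. a k \<in> span (a ` S) \<and> (\<Sum>s\<in>S. \<mu> k s * c s) \<le> c k"
  proof (intro ballI conjI)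
    fix k assume "k \<in> M"
    show in_span: "a k \<in> span (a ` S)"
    proof (rule ccontr)
      assume "a k \<notin> span (a ` S)"
      then obtain r where r: "\<And>u. u \<in> span (a ` S) \<Longrightarrow> u \<bullet> r = 0" "a k \<bullet> r = 1"
        using exists_orthogonal_to_span by blast
      define z where "z = y + (\<bar>c k - a k \<bullet> y\<bar> + 1) *\<^sub>R r"
      have "z \<in> flat a c B"
        using y r(1) assms(2) by (auto simp: z_def flat_def inner_add_right)
      moreover have "a k \<bullet> z > c k"
        using r(2) by (simp add: z_def inner_add_right)
      ultimately show False using sub \<open>k \<in> M\<close> by (force simp: face_def)
    qed
    have "\<forall>s\<in>S. a s \<bullet> y = c s" using y assms(1) by (auto simp: flat_def)
    then have "a k \<bullet> y = (\<Sum>s\<in>S. \<mu> k s * c s)"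
      by (rule inner_eq_sum_coeffs[OF \<mu>[rule_format, OF in_span]])
    then show "(\<Sum>s\<in>S. \<mu> k s * c s) \<le> c k"
      using sub y \<open>k \<in> M\<close> by (force simp: face_def)
  qed
next
  assume bounded: "\<forall>k\<in>M. a k \<in> span (a ` S) \<and> (\<Sum>s\<in>S. \<mu> k s * c s) \<le> c k"
  show "flat a c B \<subseteq> face a c M {}"
  proof
    fix z assume "z \<in> flat a c B"
    then have "\<forall>s\<in>S. a s \<bullet> z = c s" using assms(1) by (auto simp: flat_def)
    then have "a k \<bullet> z \<le> c k" if "k \<in> M" for k
      using inner_eq_sum_coeffs[OF \<mu>[rule_format]] bounded that by metis
    then show "z \<in> face a c M {}" by (simp add: face_def)
  qed
qed

lemma span_coefficients:
  fixes a :: "'i \<Rightarrow> 'v::real_vector"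
  assumes "finite S" "inj_on a S"
  obtains \<mu> where "\<forall>k. a k \<in> span (a ` S) \<longrightarrow> a k = (\<Sum>s\<in>S. \<mu> k s *\<^sub>R a s)"
proof -
  have "\<exists>\<mu>. a k = (\<Sum>s\<in>S. \<mu> s *\<^sub>R a s)" if "a k \<in> span (a ` S)" for k
    using that assms by (auto simp: span_finite sum.reindex)
  then show ?thesis using that by metis
qed

lemma flat_in_polyhedron_iff_linear:
  fixes a :: "'i \<Rightarrow> 'v::euclidean_space"
  obtains S \<mu> where "finite S"
    "\<And>c. flat a c B \<noteq> {} \<and> flat a c B \<subseteq> face a c M {} \<longleftrightarrow>
           (\<forall>i\<in>B. (\<Sum>s\<in>S. \<mu> i s * c s) = c i) \<and> (\<forall>k\<in>M. a k \<in> span (a ` S) \<and> (\<Sum>s\<in>S. \<mu> k s * c s) \<le> c k)"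
proof -
  obtain V where V: "V \<subseteq> a ` B" "independent V" "a ` B \<subseteq> span V"
    using maximal_independent_subset[of "a ` B"] by blast
  then obtain S where S: "S \<subseteq> B" "inj_on a S" "V = a ` S"
    by (auto simp: subset_image_inj)
  have "finite S" using S(2,3) independent_imp_finite[OF V(2)] finite_imageD by blast
  obtain w where w: "\<forall>s\<in>S. \<forall>t\<in>S. a s \<bullet> w t = (if s = t then 1 else 0)"
    using biorthogonal_system V(2) S(2,3) by blast
  obtain \<mu> where \<mu>: "\<forall>k. a k \<in> span (a ` S) \<longrightarrow> a k = (\<Sum>s\<in>S. \<mu> k s *\<^sub>R a s)"
    using span_coefficients[OF \<open>finite S\<close> S(2)] by blast
  have spans: "a ` B \<subseteq> span (a ` S)" using V(3) S(3) by simp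
  then have \<mu>_B: "\<forall>i\<in>B. a i = (\<Sum>s\<in>S. \<mu> i s *\<^sub>R a s)" using \<mu> by blast
  have "flat a c B \<noteq> {} \<and> flat a c B \<subseteq> face a c M {} \<longleftrightarrow>
          (\<forall>i\<in>B. (\<Sum>s\<in>S. \<mu> i s * c s) = c i) \<and>
          (\<forall>k\<in>M. a k \<in> span (a ` S) \<and> (\<Sum>s\<in>S. \<mu> k s * c s) \<le> c k)" for c
  proof (cases "flat a c B = {}")
    case True
    then show ?thesis using flat_nonempty_iff[OF \<open>finite S\<close> S(1) w \<mu>_B] by blast
  next
    case False
    then obtain y where "y \<in> flat a c B" by blast
    then show ?thesis
      using flat_nonempty_iff[OF \<open>finite S\<close> S(1) w \<mu>_B] False
        flat_subset_polyhedron_iff[OF S(1) spans \<mu>] by blast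
  qed
  with \<open>finite S\<close> show ?thesis using that by blast
qed

definition eventually_decided :: "('a \<Rightarrow> bool) \<Rightarrow> 'a filter \<Rightarrow> bool" where
  "eventually_decided P F \<longleftrightarrow> eventually P F \<or> eventually (\<lambda>x. \<not> P x) F"

lemma eventually_decided_const: "eventually_decided (\<lambda>x. Q) F"
  by (cases Q) (auto simp: eventually_decided_def)

lemma eventually_decided_conj:
  assumes "eventually_decided P F" "eventually_decided Q F"
  shows "eventually_decided (\<lambda>x. P x \<and> Q x) F"
proof (cases "eventually P F \<and> eventually Q F")
  case True
  then show ?thesis by (simp add: eventually_decided_def eventually_conj)
next
  case False
  then have "eventually (\<lambda>x. \<not> P x) F \<or> eventually (\<lambda>x. \<not> Q x) F"
    using assms by (auto simp: eventually_decided_def)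
  then have "eventually (\<lambda>x. \<not> (P x \<and> Q x)) F" by (auto elim: eventually_mono)
  then show ?thesis by (simp add: eventually_decided_def)
qed

lemma eventually_decided_ball:
  assumes "finite S" "\<And>s. s \<in> S \<Longrightarrow> eventually_decided (P s) F"
  shows "eventually_decided (\<lambda>x. \<forall>s\<in>S. P s x) F"
proof (cases "\<exists>s\<in>S. eventually (\<lambda>x. \<not> P s x) F")
  case True
  then have "eventually (\<lambda>x. \<not> (\<forall>s\<in>S. P s x)) F" by (auto elim: eventually_mono)
  then show ?thesis by (simp add: eventually_decided_def)
next
  case False
  then have "\<forall>s\<in>S. eventually (P s) F" using assms(2) by (auto simp: eventually_decided_def)
  then show ?thesis
    unfolding eventually_decided_def by (auto intro: eventually_ball_finite[OF assms(1)])
qed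

lemma eventually_decided_bex:
  assumes "finite S" "\<And>s. s \<in> S \<Longrightarrow> eventually_decided (P s) F"
  shows "eventually_decided (\<lambda>x. \<exists>s\<in>S. P s x) F"
proof -
  have "eventually_decided (\<lambda>x. \<forall>s\<in>S. \<not> P s x) F"
    using assms by (intro eventually_decided_ball) (auto simp: eventually_decided_def)
  then show ?thesis by (auto simp: eventually_decided_def)
qed

lemma eventually_decided_eq_eventually:
  assumes "eventually_decided P F"
  shows "\<forall>\<^sub>F x in F. P x = eventually P F"
proof (cases "eventually P F")
  case True
  then show ?thesis by (auto elim: eventually_mono)
next
  case False
  then have "eventually (\<lambda>x. \<not> P x) F" using assms by (simp add: eventually_decided_def)
  with False show ?thesis by (auto elim: eventually_mono)
qed

lemma eventually_decided_eventually_const: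
  assumes "\<forall>\<^sub>F x in F. g x = s"
  shows "eventually_decided (\<lambda>x. Q (g x)) F"
proof (cases "Q s")
  case True
  with assms have "\<forall>\<^sub>F x in F. Q (g x)" by (auto elim: eventually_mono)
  then show ?thesis by (simp add: eventually_decided_def)
next
  case False
  with assms have "\<forall>\<^sub>F x in F. \<not> Q (g x)" by (auto elim: eventually_mono)
  then show ?thesis by (simp add: eventually_decided_def)
qed

lemma poly_eventually_sgn_at_right:
  fixes p :: "real poly"
  obtains s where "\<forall>\<^sub>F e in at_right 0. sgn (poly p e) = s"
proof (cases "p = 0")
  case True
  then show ?thesis using that by simp
next
  case False
  then obtain k q where q: "p = [:0, 1:] ^ k * q" "\<not> [:0, 1:] dvd q"
    using order_decomp[of p 0] by auto
  have "poly q 0 \<noteq> 0" using q(2) by (simp add: poly_eq_0_iff_dvd)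
  have lim: "(poly q \<longlongrightarrow> poly q 0) (at_right 0)"
    by (intro tendsto_intros)
  consider "poly q 0 < 0" | "poly q 0 > 0" using \<open>poly q 0 \<noteq> 0\<close> by linarith
  then have "\<forall>\<^sub>F e in at_right 0. sgn (poly q e) = sgn (poly q 0)"
  proof cases
    case 1
    with order_tendstoD(2)[OF lim 1] show ?thesis by (auto elim: eventually_mono)
  next
    case 2
    with order_tendstoD(1)[OF lim 2] show ?thesis by (auto elim: eventually_mono)
  qed
  moreover have "\<forall>\<^sub>F e in at_right (0::real). 0 < e"
    by (rule eventually_at_right_less)
  ultimately have "\<forall>\<^sub>F e in at_right 0. sgn (poly p e) = sgn (poly q 0)"
    by eventually_elim (simp add: q(1) sgn_mult)
  then show ?thesis using that by blast
qed

lemma real_polynomial_function_eventually_decided: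
  fixes f :: "real \<Rightarrow> real"
  assumes "real_polynomial_function f"
  shows "eventually_decided (\<lambda>e. Q (sgn (f e))) (at_right 0)"
proof -
  obtain c n where f: "f = (\<lambda>x. \<Sum>i\<le>n. c i * x ^ i)"
    using assms by (auto simp: real_polynomial_function_iff_sum)
  have "f e = poly (\<Sum>i\<le>n. monom (c i) i) e" for e
    by (simp add: f poly_sum poly_monom)
  then obtain s where "\<forall>\<^sub>F e in at_right 0. sgn (f e) = s"
    using poly_eventually_sgn_at_right[of "\<Sum>i\<le>n. monom (c i) i"] by auto
  then show ?thesis by (rule eventually_decided_eventually_const)
qed

lemma eventually_decided_flat_in_polyhedron:
  fixes a :: "nat \<Rightarrow> 'v::euclidean_space"
  assumes "finite B" "finite M"
  shows "eventually_decided
           (\<lambda>e. flat a (beps b e) B \<noteq> {} \<and> flat a (beps b e) B \<subseteq> face a (beps b e) M {}) (at_right 0)"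
proof -
  obtain S \<mu> where "finite S" and iff: "\<And>c. flat a c B \<noteq> {} \<and> flat a c B \<subseteq> face a c M {} \<longleftrightarrow>
      (\<forall>i\<in>B. (\<Sum>s\<in>S. \<mu> i s * c s) = c i) \<and> (\<forall>k\<in>M. a k \<in> span (a ` S) \<and> (\<Sum>s\<in>S. \<mu> k s * c s) \<le> c k)"
    using flat_in_polyhedron_iff_linear[where a = a and B = B and M = M] by blast
  have poly: "real_polynomial_function (\<lambda>e. (\<Sum>s\<in>S. \<mu> k s * beps b e s) - beps b e k)" for k
    unfolding beps_def
    by (intro real_polynomial_function_diff real_polynomial_function_sum \<open>finite S\<close>
        real_polynomial_function.intros real_polynomial_function_power bounded_linear_ident)
  have eq: "eventually_decided (\<lambda>e. (\<Sum>s\<in>S. \<mu> i s * beps b e s) = beps b e i) (at_right 0)" for i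
    using real_polynomial_function_eventually_decided[OF poly, of "\<lambda>s. s = 0"] by (simp add: sgn_0_0)
  have le: "eventually_decided (\<lambda>e. (\<Sum>s\<in>S. \<mu> k s * beps b e s) \<le> beps b e k) (at_right 0)" for k
    using real_polynomial_function_eventually_decided[OF poly, of "\<lambda>s. s \<le> 0"] by simp
  have "eventually_decided (\<lambda>e. (\<forall>i\<in>B. (\<Sum>s\<in>S. \<mu> i s * beps b e s) = beps b e i) \<and>
      (\<forall>k\<in>M. a k \<in> span (a ` S) \<and> (\<Sum>s\<in>S. \<mu> k s * beps b e s) \<le> beps b e k)) (at_right 0)"
    by (intro eventually_decided_conj eventually_decided_ball eventually_decided_const assms eq le)
  then show ?thesis by (simp only: iff)
qed

lemma eventually_decided_face_nonempty:
  fixes a :: "nat \<Rightarrow> 'v::euclidean_space"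
  assumes "finite M" "J \<subseteq> M"
  shows "eventually_decided (\<lambda>e. face a (beps b e) M J \<noteq> {}) (at_right 0)"
proof -
  have "finite {B. J \<subseteq> B \<and> B \<subseteq> M}" using assms(1) by simp
  then have "eventually_decided (\<lambda>e. \<exists>B\<in>{B. J \<subseteq> B \<and> B \<subseteq> M}.
      flat a (beps b e) B \<noteq> {} \<and> flat a (beps b e) B \<subseteq> face a (beps b e) M {}) (at_right 0)"
    using assms(1) finite_subset
    by (intro eventually_decided_bex eventually_decided_flat_in_polyhedron) auto
  then show ?thesis by (simp add: face_nonempty_iff_flat[OF assms] conj_assoc)
qed

lemma famF_eq:
  "famF a b m e = {J. J \<subseteq> {1..m} \<and> J \<noteq> {} \<and> face a (beps b e) {1..m} J \<noteq> {}}"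
proof -
  have "(\<Inter>i\<in>J. Feps a b m e i) = face a (beps b e) {1..m} J" if "J \<noteq> {}" for J
    using that by (auto simp: Feps_def bdHeps_def Keps_def Heps_def face_def)
  then have "(J \<subseteq> {1..m} \<and> J \<noteq> {} \<and> (\<Inter>i\<in>J. Feps a b m e i) \<noteq> {}) \<longleftrightarrow>
      (J \<subseteq> {1..m} \<and> J \<noteq> {} \<and> face a (beps b e) {1..m} J \<noteq> {})" for J
    by blast
  then show ?thesis by (simp add: famF_def)
qed

lemma eventually_famF_eq_famF0:
  fixes a :: "nat \<Rightarrow> real^'n"
  shows "\<forall>\<^sub>F e in at_right 0. famF a b m e = famF0 a b m"
proof -
  define F0 where
    "F0 = {J. J \<subseteq> {1..m} \<and> J \<noteq> {} \<and> (\<forall>\<^sub>F e in at_right 0. face a (beps b e) {1..m} J \<noteq> {})}"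
  have "\<forall>\<^sub>F e in at_right 0. \<forall>J\<in>Pow {1..m}.
      (face a (beps b e) {1..m} J \<noteq> {}) = (\<forall>\<^sub>F e in at_right 0. face a (beps b e) {1..m} J \<noteq> {})"
    by (intro eventually_ball_finite ballI eventually_decided_eq_eventually
        eventually_decided_face_nonempty) auto
  then have ev: "\<forall>\<^sub>F e in at_right 0. famF a b m e = F0"
    by eventually_elim (auto simp: famF_eq F0_def)
  have "famF0 a b m = F0"
    unfolding famF0_def
  proof (rule the_equality)
    fix F' assume "\<forall>\<^sub>F e in at_right 0. famF a b m e = F'"
    with ev have "\<forall>\<^sub>F e in at_right (0::real). F' = F0" by eventually_elim simp
    then show "F' = F0" by (simp add: eventually_const_iff)
  qed (rule ev)
  with ev show ?thesis by simp
qed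

lemma eventually_beps_less_iff:
  "\<forall>\<^sub>F e in at_right 0. {i\<in>{1..m}. beps b e i < v i} = {i\<in>{1..m}. b i < v i}"
proof -
  have "\<forall>\<^sub>F e in at_right 0. beps b e i < v i \<longleftrightarrow> b i < v i" if "i \<in> {1..m}" for i
  proof (cases "b i < v i")
    case True
    have "((\<lambda>e::real. e ^ i) \<longlongrightarrow> 0 ^ i) (at_right 0)"
      by (intro tendsto_intros)
    then have "((\<lambda>e::real. e ^ i) \<longlongrightarrow> 0) (at_right 0)"
      using that by simp
    then have "\<forall>\<^sub>F e in at_right 0. e ^ i < v i - b i"
      using True by (intro order_tendstoD(2)) auto
    then show ?thesis by (rule eventually_mono) (simp add: beps_def True)
  next
    case False
    have "b i < beps b e i" if "0 < e" for e :: real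
      using that by (simp add: beps_def)
    with False have iff: "beps b e i < v i \<longleftrightarrow> b i < v i" if "0 < e" for e :: real
      using that by force
    have "\<forall>\<^sub>F e in at_right (0::real). 0 < e" by (rule eventually_at_right_less)
    then show ?thesis by eventually_elim (rule iff)
  qed
  then have "\<forall>\<^sub>F e in at_right 0. \<forall>i\<in>{1..m}. beps b e i < v i \<longleftrightarrow> b i < v i"
    by (intro eventually_ball_finite) auto
  then show ?thesis by eventually_elim auto
qed

lemma sum_indicator_Inter_eq_euler_char:
  assumes "finite M"
  shows "(\<Sum>J | J \<subseteq> M \<and> J \<noteq> {} \<and> P J. (-1::real) ^ (card J - 1) * indicator (\<Inter>i\<in>J. H i) x) =
           euler_char P {i\<in>M. x \<in> H i}"
  unfolding euler_char_def
proof (rule sum.mono_neutral_cong_right)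
  show "finite {J. J \<subseteq> M \<and> J \<noteq> {} \<and> P J}" using assms by simp
qed (auto simp: indicator_def)

theorem theorem1:
  fixes a :: "nat \<Rightarrow> real^'n" and b :: "nat \<Rightarrow> real" and m :: nat
  assumes "m \<ge> 1"
    and "\<forall>i\<in>{1..m}. a i \<noteq> 0"
    and "{x :: real^'n. \<forall>i\<in>{1..m}. a i \<bullet> x \<le> b i} \<noteq> {}"
  shows "\<forall>x :: real^'n. indicator (\<Union>i\<in>{1..m}. Hc a b i) x =
           (\<Sum>J\<in>famF0 a b m. (-1::real) ^ (card J - 1) * indicator (\<Inter>i\<in>J. Hc a b i) x)"
proof
  fix x :: "real^'n"
  define M where "M = {1..m}"
  have "\<forall>\<^sub>F e in at_right 0. 0 < e \<and> famF a b m e = famF0 a b m \<and>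
      {i\<in>M. beps b e i < a i \<bullet> x} = {i\<in>M. b i < a i \<bullet> x}"
    unfolding M_def
    by (intro eventually_conj eventually_at_right_less eventually_famF_eq_famF0 eventually_beps_less_iff)
  then obtain e where e: "0 < e" "famF a b m e = famF0 a b m"
      "{i\<in>M. beps b e i < a i \<bullet> x} = {i\<in>M. b i < a i \<bullet> x}"
    using eventually_happens'[of "at_right (0::real)"] by force
  have "face a (beps b e) M {} \<noteq> {}"
    using assms(3) e(1) by (force simp: M_def face_def beps_def intro: add_increasing2)
  have "(\<Sum>J\<in>famF0 a b m. (-1::real) ^ (card J - 1) * indicator (\<Inter>i\<in>J. Hc a b i) x)
      = euler_char (\<lambda>J. face a (beps b e) M J \<noteq> {}) {i\<in>M. x \<in> Hc a b i}"
    unfolding e(2)[symmetric] famF_eq M_def[symmetric]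
    by (rule sum_indicator_Inter_eq_euler_char) (simp add: M_def)
  also have "\<dots> = (if \<exists>i\<in>M. b i < a i \<bullet> x then 1 else 0)"
    using euler_char_violated_faces[OF _ \<open>face a (beps b e) M {} \<noteq> {}\<close>, of x] e(3)
    by (auto simp: M_def Hc_def)
  finally show "indicator (\<Union>i\<in>{1..m}. Hc a b i) x =
      (\<Sum>J\<in>famF0 a b m. (-1::real) ^ (card J - 1) * indicator (\<Inter>i\<in>J. Hc a b i) x)"
    by (simp add: M_def Hc_def indicator_def)
qed

end
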